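(* Let $n,r,w\ge 1$ be integers and $N=nr$. The modular $N\times N$ optical cross-connect $\hat{\mathcal{Q}}(n\times r,w)$ defined below is nonblocking at each wavelength: for every wavelength $\lambda\in\{\lambda_0,\dots,\lambda_{w-1}\}$, every input $1\times n$ WSS $ap'$ and every output $n\times1$ WSS $bq'$ ($a,b\in\{0,\dots,n-1\}$, $p',q'\in\{0,\dots,r-1\}$), and every set of already established connections, if $\lambda$ is idle at input $ap'$ and idle at output $bq'$, then a connection at wavelength $\lambda$ from input $ap'$ to output $bq'$ can be established without altering the existing connections.
   Context: Model of components. A $1\times k$ wavelength selective switch (WSS) has one input and $k$ outputs; each wavelength present at its input can be switched to any one of its $k$ outputs, independently of the other wavelengths. A $k\times 1$ WSS is the inverse: it forwards to its single output signals arriving at its $k$ inputs, provided no two signals on the same wavelength are fed to it simultaneously (each wavelength at the output comes from at most one input, chosen independently per wavelength). For an integer $r$, the classical $r\times r$ OXC $\mathcal{Q}(r,w)$ consists of $r$ input $1\times r$ WSSs numbered $0,\dots,r-1$ (its inputs), $r$ output $r\times 1$ WSSs numbered $0,\dots,r-1$ (its outputs), and, for all $p',q'$, exactly one fiber from the $q'$th output of input WSS $p'$ to the $p'$th input of output WSS $q'$. The modular OXC $\hat{\mathcal{Q}}(n\times r,w)$ consists of: $N$ input $1\times n$ WSSs labelled $ap'$ (the $p$th one, $p=ar+p'$; these are the OXC inputs), $n^2$ classical $r\times r$ OXCs $\mathcal{Q}_{ab}(r)$ ($a,b\in\{0,\dots,n-1\}$), and $N$ output $n\times 1$ WSSs labelled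 $bq'$ (the $q$th one, $q=br+q'$; these are the OXC outputs). The $b$th output of $1\times n$ WSS $ap'$ is connected to the $p'$th input of $\mathcal{Q}_{ab}(r)$, and the $q'$th output of $\mathcal{Q}_{ab}(r)$ is connected to the $a$th input of $n\times1$ WSS $bq'$. Every port and link carries wavelengths $\lambda_0,\dots,\lambda_{w-1}$; a connection at wavelength $\lambda$ from input $ap'$ to output $bq'$ uses $\lambda$ along a path of links from that input to that output; each wavelength on each port or link is used by at most one connection, and a wavelength is idle at a port if no existing connection uses it there. *)

theory Defs
  imports Main
begin

text \<open>InPort a p      : the input port of the input 1xn WSS a p'  (OXC input ap')
  InLink a p b    : fiber from output b of input WSS a p' to input p' of Q_ab(r)
  MidLink a b p q : fiber inside Q_ab(r) from output q' of its input WSS p'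
                    to input p' of its output WSS q'
  OutLink a b q   : fiber from output q' of Q_ab(r) to input a of output WSS b q'
  OutPort b q     : the output port of the output nx1 WSS b q' (OXC output bq')\<close>

datatype link =
    InPort nat nat
  | InLink nat nat nat
  | MidLink nat nat nat nat
  | OutLink nat nat nat
  | OutPort nat nat

fun adj :: "nat \<Rightarrow> nat \<Rightarrow> link \<Rightarrow> link \<Rightarrow> bool" where
  "adj n r (InPort a p) l =
     (\<exists>b. b < n \<and> a < n \<and> p < r \<and> l = InLink a p b)"
| "adj n r (InLink a p b) l =
     (\<exists>q. q < r \<and> a < n \<and> b < n \<and> p < r \<and> l = MidLink a b p q)"
| "adj n r (MidLink a b p q) l =
     (a < n \<and> b < n \<and> p < r \<and> q < r \<and> l = OutLink a b q)"
| "adj n r (OutLink a b q) l =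
     (a < n \<and> b < n \<and> q < r \<and> l = OutPort b q)"
| "adj n r (OutPort b q) l = False"

definition valid_path :: "nat \<Rightarrow> nat \<Rightarrow> nat \<Rightarrow> nat \<Rightarrow> nat \<Rightarrow> nat \<Rightarrow> link list \<Rightarrow> bool" where
  "valid_path n r a p b q ps \<longleftrightarrow>
     ps \<noteq> [] \<and> hd ps = InPort a p \<and> last ps = OutPort b q \<and>
     (\<forall>i. Suc i < length ps \<longrightarrow> adj n r (ps ! i) (ps ! Suc i))"

text \<open>A connection is a pair (wavelength index, path of links); wavelength k stands for lambda_k.\<close>
type_synonym connection = "nat \<times> link list"

definition is_connection :: "nat \<Rightarrow> nat \<Rightarrow> nat \<Rightarrow> connection \<Rightarrow> bool" where
  "is_connection n r w c \<longleftrightarrow>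
     fst c < w \<and> (\<exists>a p b q. valid_path n r a p b q (snd c))"

definition valid_state :: "nat \<Rightarrow> nat \<Rightarrow> nat \<Rightarrow> connection set \<Rightarrow> bool" where
  "valid_state n r w C \<longleftrightarrow>
     (\<forall>c\<in>C. is_connection n r w c) \<and>
     (\<forall>c1\<in>C. \<forall>c2\<in>C. c1 \<noteq> c2 \<longrightarrow> fst c1 = fst c2 \<longrightarrow> set (snd c1) \<inter> set (snd c2) = {})"

definition idle :: "connection set \<Rightarrow> nat \<Rightarrow> link \<Rightarrow> bool" where
  "idle C lam l \<longleftrightarrow> (\<forall>c\<in>C. fst c = lam \<longrightarrow> l \<notin> set (snd c))"

end

theory Submission
  imports Defs
begin

text \<open>Route the new connection straight through the middle OXC Q_ab(r). Of its five links,
  InLink a p' b and MidLink a b p' q' can only be entered from the input port a p', and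
  OutLink a b q' can only be left towards the output port b q'. Hence any existing path
  that meets the route also meets one of its two end ports, which are idle at the
  requested wavelength; so the route is free at that wavelength.\<close>

lemma chain_mem_has_pred:
  assumes chain: "\<forall>i. Suc i < length xs \<longrightarrow> R (xs ! i) (xs ! Suc i)"
    and "x \<in> set xs" and "x \<noteq> hd xs"
  shows "\<exists>y\<in>set xs. R y x"
proof -
  obtain i where i: "i < length xs" "xs ! i = x"
    using \<open>x \<in> set xs\<close> by (auto simp: in_set_conv_nth)
  with \<open>x \<noteq> hd xs\<close> obtain j where "i = Suc j"
    by (cases i) (auto simp: hd_conv_nth)
  with chain i show ?thesis
    by (metis Suc_lessD nth_mem)
qed

lemma chain_mem_has_succ:
  assumes chain: "\<forall>i. Suc i < length xs \<longrightarrow> R (xs ! i) (xs ! Suc i)"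
    and "x \<in> set xs" and "x \<noteq> last xs"
  shows "\<exists>y\<in>set xs. R x y"
proof -
  obtain i where i: "i < length xs" "xs ! i = x"
    using \<open>x \<in> set xs\<close> by (auto simp: in_set_conv_nth)
  with \<open>x \<noteq> last xs\<close> have "Suc i < length xs"
    by (metis One_nat_def Suc_lessI diff_Suc_1 last_conv_nth list.size(3) not_less0)
  with chain i show ?thesis
    by (metis nth_mem)
qed

lemma valid_path_InLink_imp_InPort:
  assumes "valid_path n r a' p' b' q' ps" and "InLink a p b \<in> set ps"
  shows "InPort a p \<in> set ps"
proof -
  obtain y where "y \<in> set ps" and "adj n r y (InLink a p b)"
    using chain_mem_has_pred[of ps "adj n r"] assms by (auto simp: valid_path_def)
  moreover from \<open>adj n r y (InLink a p b)\<close> have "y = InPort a p"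
    by (cases y) auto
  ultimately show ?thesis by simp
qed

lemma valid_path_MidLink_imp_InPort:
  assumes "valid_path n r a' p' b' q' ps" and "MidLink a b p q \<in> set ps"
  shows "InPort a p \<in> set ps"
proof -
  obtain y where "y \<in> set ps" and "adj n r y (MidLink a b p q)"
    using chain_mem_has_pred[of ps "adj n r"] assms by (auto simp: valid_path_def)
  moreover from \<open>adj n r y (MidLink a b p q)\<close> have "y = InLink a p b"
    by (cases y) auto
  ultimately show ?thesis
    using valid_path_InLink_imp_InPort assms(1) by blast
qed

lemma valid_path_OutLink_imp_OutPort:
  assumes "valid_path n r a' p' b' q' ps" and "OutLink a b q \<in> set ps"
  shows "OutPort b q \<in> set ps"
proof -
  have "\<exists>y\<in>set ps. adj n r (OutLink a b q) y"
    using assms unfolding valid_path_def by (intro chain_mem_has_succ) auto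
  then show ?thesis by auto
qed

definition route :: "nat \<Rightarrow> nat \<Rightarrow> nat \<Rightarrow> nat \<Rightarrow> link list" where
  "route a p b q = [InPort a p, InLink a p b, MidLink a b p q, OutLink a b q, OutPort b q]"

lemma valid_path_route:
  assumes "a < n" and "b < n" and "p < r" and "q < r"
  shows "valid_path n r a p b q (route a p b q)"
proof -
  have "adj n r (route a p b q ! i) (route a p b q ! Suc i)" if "Suc i < 5" for i
  proof -
    from that have "i = 0 \<or> i = 1 \<or> i = 2 \<or> i = 3" by auto
    then show ?thesis
      using assms by (auto simp: route_def numeral_eq_Suc)
  qed
  then show ?thesis
    by (simp add: valid_path_def route_def)
qed

lemma route_disjoint:
  assumes "valid_path n r a' p' b' q' ps"
    and "InPort a p \<notin> set ps" and "OutPort b q \<notin> set ps"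
  shows "set ps \<inter> set (route a p b q) = {}"
  using assms valid_path_InLink_imp_InPort[OF assms(1), of a p b]
    valid_path_MidLink_imp_InPort[OF assms(1), of a b p q]
    valid_path_OutLink_imp_OutPort[OF assms(1), of a b q]
  by (auto simp: route_def)

lemma valid_state_insert:
  assumes "valid_state n r w C" and "is_connection n r w c"
    and "\<forall>c'\<in>C. fst c' = fst c \<longrightarrow> set (snd c') \<inter> set (snd c) = {}"
  shows "valid_state n r w (insert c C)"
  using assms unfolding valid_state_def by (auto simp: Int_commute)

theorem theorem1:
  fixes n r w lam a p b q :: nat and C :: "connection set"
  assumes "n \<ge> 1" and "r \<ge> 1" and "w \<ge> 1"
    and "lam < w" and "a < n" and "b < n" and "p < r" and "q < r"
    and "valid_state n r w C"
    and "idle C lam (InPort a p)" and "idle C lam (OutPort b q)"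
  shows "\<exists>ps. valid_path n r a p b q ps \<and> valid_state n r w (C \<union> {(lam, ps)})"
proof (intro exI conjI)
  show path: "valid_path n r a p b q (route a p b q)"
    using assms(5-8) by (rule valid_path_route)
  have "set (snd c) \<inter> set (route a p b q) = {}" if "c \<in> C" and "fst c = lam" for c
  proof -
    obtain a' p' b' q' where "valid_path n r a' p' b' q' (snd c)"
      using \<open>valid_state n r w C\<close> \<open>c \<in> C\<close> by (auto simp: valid_state_def is_connection_def)
    then show ?thesis
      using route_disjoint assms(10,11) that by (auto simp: idle_def)
  qed
  then have "valid_state n r w (insert (lam, route a p b q) C)"
    using \<open>valid_state n r w C\<close> path \<open>lam < w\<close>
    by (intro valid_state_insert) (auto simp: is_connection_def)
  then show "valid_state n r w (C \<union> {(lam, route a p b q)})"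
    by simp
qed

end
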